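(* Let $F$ be a field and $T_3$ the ring of lower triangular $3\times3$ matrices over $F$. Two pairs $(x,y),(w,z)\in T_3^2$ each generating a free cyclic submodule lie in the same $GL_2(T_3)$-orbit (under right multiplication) if and only if the right ideals $xT_3+yT_3$ and $wT_3+zT_3$ coincide.
   Context: Rings are associative with identity. $T_3^2$ is the free left $T_3$-module of pairs; for $(a,b)$, $T_3(a,b)=\{(\alpha a,\alpha b):\alpha\in T_3\}$ is free if $r(a,b)=(0,0)$ implies $r=0$. $GL_2(T_3)$ acts on pairs by right multiplication of the row vector $(a,b)$ by an invertible $2\times2$ matrix over $T_3$. *)

theory Defs
  imports "HOL-Analysis.Analysis"
begin

text \<open>The ring T_3 of lower triangular 3x3 matrices over a field, realised as the
set of matrices in 'a^3^3 whose entries strictly above the diagonal vanish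
(index type 3 carries its natural linear order 0 < 1 < 2).\<close>

definition T3 :: "('a::field ^3^3) set" where
  "T3 = {M. \<forall>i j. i < j \<longrightarrow> M $ i $ j = 0}"

text \<open>T_3(a,b) is a free cyclic submodule of the left module T_3^2.\<close>
definition free_pair :: "'a::field ^3^3 \<Rightarrow> 'a ^3^3 \<Rightarrow> bool" where
  "free_pair a b \<longleftrightarrow> (\<forall>r\<in>T3. r ** a = 0 \<and> r ** b = 0 \<longrightarrow> r = 0)"

text \<open>A 2x2 matrix over T_3, written as (p,q,r,s) for [[p,q],[r,s]].\<close>
type_synonym 'a mat2T = "('a^3^3) \<times> ('a^3^3) \<times> ('a^3^3) \<times> ('a^3^3)"

fun mat2_mult :: "'a::field mat2T \<Rightarrow> 'a mat2T \<Rightarrow> 'a mat2T" where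
  "mat2_mult (p,q,r,s) (p',q',r',s') =
     (p ** p' + q ** r', p ** q' + q ** s', r ** p' + s ** r', r ** q' + s ** s')"

definition mat2_one :: "'a::field mat2T" where
  "mat2_one = (mat 1, 0, 0, mat 1)"

fun in_T3_mat2 :: "'a::field mat2T \<Rightarrow> bool" where
  "in_T3_mat2 (p,q,r,s) = (p \<in> T3 \<and> q \<in> T3 \<and> r \<in> T3 \<and> s \<in> T3)"

definition GL2T3 :: "'a::field mat2T set" where
  "GL2T3 = {A. in_T3_mat2 A \<and> (\<exists>B. in_T3_mat2 B \<and> mat2_mult A B = mat2_one \<and> mat2_mult B A = mat2_one)}"

fun act :: "('a::field ^3^3) \<times> ('a^3^3) \<Rightarrow> 'a mat2T \<Rightarrow> ('a^3^3) \<times> ('a^3^3)" where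
  "act (a,b) (p,q,r,s) = (a ** p + b ** r, a ** q + b ** s)"

definition right_ideal2 :: "'a::field ^3^3 \<Rightarrow> 'a^3^3 \<Rightarrow> ('a^3^3) set" where
  "right_ideal2 x y = {x ** s + y ** t | s t. s \<in> T3 \<and> t \<in> T3}"

end

theory Submission
  imports Defs
begin

text \<open>
  The forward implication is formal: an invertible A and its inverse both have entries in T_3, so
  each of the pairs (x,y) and (w,z) lies in the right ideal generated by the other.

  For the converse compare the pairs column by column. If x T_3 + y T_3 = w T_3 + z T_3, then
  for every column index j the j-th columns X, Y of x, y and W, Z of w, z span the same subspace
  of F^3 modulo the subspace U_j contributed by the columns to the right of j, which is
  determined by the right ideal alone. Linear algebra in F^3/U_j gives an invertible scalar
  2x2 matrix relating (W,Z) to (X,Y) modulo U_j, and lifting these relations yields a 2x2 matrix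
  over T_3 mapping (x,y) to (w,z) whose diagonal 2x2 blocks are all invertible. Such a matrix is
  invertible, because modulo the nilpotent ideal of matrices with strictly lower triangular
  entries, M_2(T_3) is a product of three copies of M_2(F).
\<close>

section \<open>Lower triangular 3x3 matrices\<close>

lemma index3_less: "(0::3) < 1" "(1::3) < 2" "(0::3) < 2"
  by (simp_all add: less_bit1_def bit1.Rep_0 bit1.Rep_1 bit1.Rep_numeral)

lemma index3_cases: "(k::3) = 0 \<or> k = 1 \<or> k = 2"
proof -
  have "(3::3) = 0" by simp
  then show ?thesis using exhaust_3[of k] by metis
qed

lemma UNIV_index3: "(UNIV::3 set) = {0, 1, 2}"
  using index3_cases by auto

lemma forall_index3: "(\<forall>i::3. P i) \<longleftrightarrow> P 0 \<and> P 1 \<and> P 2"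
  using index3_cases by metis

lemma sum_index3: "sum f (UNIV::3 set) = f 0 + f 1 + f 2"
  unfolding UNIV_index3 using index3_less by (simp add: add.assoc order.strict_implies_not_eq)

lemma T3_mult: assumes "a \<in> T3" "b \<in> T3" shows "a ** b \<in> T3"
proof -
  have "a$i$k * b$k$j = 0" if "i < j" for i j k :: 3
    using assms that by (cases "k \<le> i") (auto simp: T3_def)
  then show ?thesis by (auto simp: T3_def matrix_matrix_mult_def intro!: sum.neutral)
qed

lemma T3_add: "a \<in> T3 \<Longrightarrow> b \<in> T3 \<Longrightarrow> a + b \<in> T3"
  and T3_diff: "a \<in> T3 \<Longrightarrow> b \<in> T3 \<Longrightarrow> a - b \<in> T3"
  and T3_zero: "0 \<in> T3"
  and T3_one: "mat 1 \<in> T3"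
  by (simp_all add: T3_def mat_def)

lemma matrix_add_rdistrib: "(A + B) ** C = A ** C + B ** C"
  by (simp add: vec_eq_iff matrix_matrix_mult_def sum.distrib distrib_right)

lemma act_act: "act (act v A) B = act v (mat2_mult A B)"
  by (cases v; cases A; cases B)
     (simp add: matrix_add_rdistrib matrix_add_ldistrib matrix_mul_assoc algebra_simps)

lemma act_mat2_one: "act v mat2_one = v"
  by (cases v) (simp add: mat2_one_def)

lemma right_ideal2_act_subset:
  assumes "act (x, y) A = (w, z)" "in_T3_mat2 A"
  shows "right_ideal2 w z \<subseteq> right_ideal2 x y"
proof
  fix m assume "m \<in> right_ideal2 w z"
  then obtain s t where m: "m = w ** s + z ** t" and st: "s \<in> T3" "t \<in> T3"
    by (auto simp: right_ideal2_def)
  obtain p q r u where A: "A = (p, q, r, u)" by (cases A)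
  then have pqru: "p \<in> T3" "q \<in> T3" "r \<in> T3" "u \<in> T3" using assms(2) by auto
  have "m = x ** (p ** s + q ** t) + y ** (r ** s + u ** t)"
    using assms(1) unfolding m A
    by (auto simp: matrix_add_rdistrib matrix_add_ldistrib matrix_mul_assoc algebra_simps)
  moreover have "p ** s + q ** t \<in> T3" "r ** s + u ** t \<in> T3"
    using pqru st by (simp_all add: T3_add T3_mult)
  ultimately show "m \<in> right_ideal2 x y" unfolding right_ideal2_def by blast
qed

lemma right_ideal2_eq_if_GL2T3:
  assumes "A \<in> GL2T3" "act (x, y) A = (w, z)"
  shows "right_ideal2 x y = right_ideal2 w z"
proof -
  obtain B where "in_T3_mat2 A" "in_T3_mat2 B" "mat2_mult A B = mat2_one"
    using assms(1) unfolding GL2T3_def by auto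
  moreover have "act (w, z) B = (x, y)"
    using assms(2) act_act[of "(x, y)" A B] act_mat2_one \<open>mat2_mult A B = mat2_one\<close> by simp
  ultimately show ?thesis using right_ideal2_act_subset assms(2) by blast
qed

section \<open>Invertible 2x2 matrices over T_3\<close>

text \<open>The 2x2 matrices over T_3 as a type, so that the algebra of \<open>ring_1\<close> is available for them;
  the ring laws hold for all 2x2 matrices over the ambient ring of 3x3 matrices.\<close>

typedef (overloaded) 'a mat2 = "UNIV :: 'a::field mat2T set" ..

setup_lifting type_definition_mat2

instantiation mat2 :: (field) ring_1
begin

lift_definition zero_mat2 :: "'a mat2" is "(0, 0, 0, 0)" .
lift_definition one_mat2 :: "'a mat2" is mat2_one .
lift_definition plus_mat2 :: "'a mat2 \<Rightarrow> 'a mat2 \<Rightarrow> 'a mat2" is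
  "\<lambda>(p, q, r, s) (p', q', r', s'). (p + p', q + q', r + r', s + s')" .
lift_definition minus_mat2 :: "'a mat2 \<Rightarrow> 'a mat2 \<Rightarrow> 'a mat2" is
  "\<lambda>(p, q, r, s) (p', q', r', s'). (p - p', q - q', r - r', s - s')" .
lift_definition uminus_mat2 :: "'a mat2 \<Rightarrow> 'a mat2" is "\<lambda>(p, q, r, s). (- p, - q, - r, - s)" .
lift_definition times_mat2 :: "'a mat2 \<Rightarrow> 'a mat2 \<Rightarrow> 'a mat2" is mat2_mult .

instance
proof
  fix a b c :: "'a mat2"
  show "a * b * c = a * (b * c)"
    by transfer (clarsimp simp: matrix_add_rdistrib matrix_add_ldistrib matrix_mul_assoc algebra_simps)
  show "(a + b) * c = a * c + b * c"
    by transfer (clarsimp simp: matrix_add_rdistrib algebra_simps)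
  show "a * (b + c) = a * b + a * c"
    by transfer (clarsimp simp: matrix_add_ldistrib algebra_simps)
  show "1 * a = a" by transfer (clarsimp simp: mat2_one_def)
  show "a * 1 = a" by transfer (clarsimp simp: mat2_one_def)
  show "a + b + c = a + (b + c)" by transfer (clarsimp simp: algebra_simps)
  show "a + b = b + a" by transfer (clarsimp simp: algebra_simps)
  show "0 + a = a" by transfer clarsimp
  show "- a + a = 0" by transfer clarsimp
  show "a - b = a + - b" by transfer clarsimp
  have "(mat 1 :: 'a^3^3) $ 0 $ 0 \<noteq> 0 $ 0 $ 0" by (simp add: mat_def)
  then have "(mat 1 :: 'a^3^3) \<noteq> 0" by metis
  then show "(0::'a mat2) \<noteq> 1" by transfer (simp add: mat2_one_def)
qed

end

lift_definition mat2_T3 :: "'a::field mat2 \<Rightarrow> bool" is in_T3_mat2 .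

lemma mat2_T3_mult: "mat2_T3 a \<Longrightarrow> mat2_T3 b \<Longrightarrow> mat2_T3 (a * b)"
  and mat2_T3_add: "mat2_T3 a \<Longrightarrow> mat2_T3 b \<Longrightarrow> mat2_T3 (a + b)"
  and mat2_T3_diff: "mat2_T3 a \<Longrightarrow> mat2_T3 b \<Longrightarrow> mat2_T3 (a - b)"
  and mat2_T3_one: "mat2_T3 1"
  subgoal by transfer (clarsimp simp: T3_add T3_mult)
  subgoal by transfer (clarsimp simp: T3_add)
  subgoal by transfer (clarsimp simp: T3_diff)
  subgoal by transfer (simp add: mat2_one_def T3_zero T3_one)
  done

definition strictly_lower :: "('a::field^3^3) set" where
  "strictly_lower = {M. \<forall>i j. i \<le> j \<longrightarrow> M $ i $ j = 0}"

lemma strictly_lower_mult3: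
  assumes "a \<in> strictly_lower" "b \<in> strictly_lower" "c \<in> strictly_lower"
  shows "a ** b ** c = 0"
proof -
  have le: "(0::3) \<le> 1" "(0::3) \<le> 2" "(1::3) \<le> 2" using index3_less by simp_all
  show ?thesis using assms le
    by (simp add: strictly_lower_def forall_index3 matrix_matrix_mult_def sum_index3 vec_eq_iff)
qed

lift_definition mat2_strictly_lower :: "'a::field mat2 \<Rightarrow> bool" is
  "\<lambda>(p, q, r, s). p \<in> strictly_lower \<and> q \<in> strictly_lower \<and> r \<in> strictly_lower \<and> s \<in> strictly_lower" .

lemma mat2_strictly_lower_cube: "mat2_strictly_lower N \<Longrightarrow> N * N * N = 0"
  by transfer (clarsimp simp: matrix_add_rdistrib strictly_lower_mult3)

lemma invertible_if_invertible_mod_nilpotent: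
  fixes a e N N' :: "'r::ring_1"
  assumes "e * a = 1 + N" "a * e = 1 + N'" "N * N * N = 0" "N' * N' * N' = 0"
  shows "a * ((1 - N + N * N) * e) = 1" "(1 - N + N * N) * e * a = 1"
proof -
  define l where "l = (1 - N + N * N) * e"
  define r where "r = e * (1 - N' + N' * N')"
  have "l * a = (1 - N + N * N) * (1 + N)" by (simp add: l_def assms(1) mult.assoc)
  also have "\<dots> = 1 + N * N * N" by (simp add: algebra_simps)
  finally have la: "l * a = 1" using assms(3) by simp
  have "a * r = (1 + N') * (1 - N' + N' * N')" by (simp add: r_def assms(2) mult.assoc[symmetric])
  also have "\<dots> = 1 + N' * N' * N'" by (simp add: algebra_simps)
  finally have ar: "a * r = 1" using assms(4) by simp
  have "l = r" by (metis la ar mult.assoc mult_1_left mult_1_right)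
  then show "a * ((1 - N + N * N) * e) = 1" "(1 - N + N * N) * e * a = 1"
    using la ar by (simp_all add: l_def)
qed

definition diag_mat :: "('n::finite \<Rightarrow> 'a::semiring_1) \<Rightarrow> 'a^'n^'n" where
  "diag_mat f = (\<chi> i j. if i = j then f i else 0)"

lemma diag_mat_mult_left: "diag_mat f ** M = (\<chi> i j. f i * M $ i $ j)"
  unfolding diag_mat_def matrix_matrix_mult_def
  by (auto simp: vec_eq_iff if_distrib if_distribR sum.delta cong: if_cong)

lemma diag_mat_mult_right: "M ** diag_mat f = (\<chi> i j. M $ i $ j * f j)"
  unfolding diag_mat_def matrix_matrix_mult_def
  by (auto simp: vec_eq_iff if_distrib if_distribR sum.delta' cong: if_cong)

lemma diag_mat_mult_vector: "diag_mat f *v v = (\<chi> i. f i * v $ i)"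
  unfolding diag_mat_def matrix_vector_mult_def
  by (auto simp: vec_eq_iff if_distrib if_distribR sum.delta cong: if_cong)

lemma diag_mat_T3: "diag_mat f \<in> T3"
  by (simp add: diag_mat_def T3_def)

lemma strictly_lower_if_T3_diag_eq:
  assumes "M \<in> T3" "\<And>i. M $ i $ i = c"
  shows "M - mat c \<in> strictly_lower"
proof -
  have "(M - mat c) $ i $ j = 0" if "i \<le> j" for i j
    using assms that by (cases "i = j") (auto simp: T3_def mat_def)
  then show ?thesis by (simp add: strictly_lower_def)
qed

lemma strictly_lower_diag_mat_combination_left:
  assumes "p \<in> T3" "r \<in> T3" "\<And>i. f i * p $ i $ i + g i * r $ i $ i = c"
  shows "diag_mat f ** p + diag_mat g ** r - mat c \<in> strictly_lower"
proof (rule strictly_lower_if_T3_diag_eq)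
  show "diag_mat f ** p + diag_mat g ** r \<in> T3" using assms(1,2) by (simp add: T3_add T3_mult diag_mat_T3)
qed (simp add: diag_mat_mult_left assms(3))

lemma strictly_lower_diag_mat_combination_right:
  assumes "p \<in> T3" "r \<in> T3" "\<And>i. p $ i $ i * f i + r $ i $ i * g i = c"
  shows "p ** diag_mat f + r ** diag_mat g - mat c \<in> strictly_lower"
proof (rule strictly_lower_if_T3_diag_eq)
  show "p ** diag_mat f + r ** diag_mat g \<in> T3" using assms(1,2) by (simp add: T3_add T3_mult diag_mat_T3)
qed (simp add: diag_mat_mult_right assms(3))

lemma adjugate_coefficients:
  fixes a b c e d :: "'a::field"
  assumes "a * e - b * c = d" "d \<noteq> 0"
  shows "e / d * a + - b / d * c = 1" "e / d * b + - b / d * e = 0"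
    "- c / d * a + a / d * c = 0" "- c / d * b + a / d * e = 1"
    "a * (e / d) + b * (- c / d) = 1" "a * (- b / d) + b * (a / d) = 0"
    "c * (e / d) + e * (- c / d) = 0" "c * (- b / d) + e * (a / d) = 1"
  using assms(2) by (simp_all add: field_simps) (simp_all add: algebra_simps flip: assms(1))
lemma mat2_T3_invertible_if_invertible_mod_strictly_lower:
  assumes "mat2_T3 a" "mat2_T3 e"
    and "mat2_strictly_lower (e * a - 1)" "mat2_strictly_lower (a * e - 1)"
  obtains b where "mat2_T3 b" "a * b = 1" "b * a = 1"
proof -
  define b where "b = (1 - (e * a - 1) + (e * a - 1) * (e * a - 1)) * e"
  have "a * b = 1" "b * a = 1"
    using invertible_if_invertible_mod_nilpotent[of e a "e * a - 1" "a * e - 1"] assms(3,4)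
    by (simp_all add: b_def mat2_strictly_lower_cube)
  moreover have "mat2_T3 b"
    unfolding b_def using assms(1,2) by (intro mat2_T3_mult mat2_T3_add mat2_T3_diff mat2_T3_one)
  ultimately show ?thesis using that by blast
qed

lemma GL2T3_if_diagonal_dets_nonzero:
  assumes T: "in_T3_mat2 (p, q, r, s)"
    and det: "\<And>i. p $ i $ i * s $ i $ i - q $ i $ i * r $ i $ i \<noteq> 0"
  shows "(p, q, r, s) \<in> GL2T3"
proof -
  define d where "d i = p $ i $ i * s $ i $ i - q $ i $ i * r $ i $ i" for i
  define a where "a = Abs_mat2 (p, q, r, s)"
  \<comment> \<open>the blockwise inverse of the diagonal part of \<open>a\<close>, given by the adjugates of its 2x2 blocks\<close>
  define e where "e = Abs_mat2 (diag_mat (\<lambda>i. s $ i $ i / d i), diag_mat (\<lambda>i. - q $ i $ i / d i),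
      diag_mat (\<lambda>i. - r $ i $ i / d i), diag_mat (\<lambda>i. p $ i $ i / d i))"
  have Tpqrs: "p \<in> T3" "q \<in> T3" "r \<in> T3" "s \<in> T3" using T by simp_all
  have d: "d i \<noteq> 0" for i using det by (simp add: d_def)
  note coeffs = adjugate_coefficients[OF d_def[symmetric] d]
  have "mat2_strictly_lower (e * a - 1)"
    unfolding a_def e_def times_mat2.abs_eq one_mat2.abs_eq minus_mat2.abs_eq mat2_strictly_lower.abs_eq
    using strictly_lower_diag_mat_combination_left[OF Tpqrs(1,3) coeffs(1)]
      strictly_lower_diag_mat_combination_left[OF Tpqrs(2,4) coeffs(2)]
      strictly_lower_diag_mat_combination_left[OF Tpqrs(1,3) coeffs(3)]
      strictly_lower_diag_mat_combination_left[OF Tpqrs(2,4) coeffs(4)]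
    by (simp add: mat2_one_def)
  moreover have "mat2_strictly_lower (a * e - 1)"
    unfolding a_def e_def times_mat2.abs_eq one_mat2.abs_eq minus_mat2.abs_eq mat2_strictly_lower.abs_eq
    using strictly_lower_diag_mat_combination_right[OF Tpqrs(1,2) coeffs(5)]
      strictly_lower_diag_mat_combination_right[OF Tpqrs(1,2) coeffs(6)]
      strictly_lower_diag_mat_combination_right[OF Tpqrs(3,4) coeffs(7)]
      strictly_lower_diag_mat_combination_right[OF Tpqrs(3,4) coeffs(8)]
    by (simp add: mat2_one_def)
  moreover have "mat2_T3 a" "mat2_T3 e" using T by (simp_all add: a_def e_def mat2_T3.abs_eq diag_mat_T3)
  ultimately obtain b where b: "mat2_T3 b" "a * b = 1" "b * a = 1"
    using mat2_T3_invertible_if_invertible_mod_strictly_lower by metis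
  have "in_T3_mat2 (Rep_mat2 b)" using b(1) by (simp add: mat2_T3.rep_eq)
  moreover have "mat2_mult (p, q, r, s) (Rep_mat2 b) = mat2_one" "mat2_mult (Rep_mat2 b) (p, q, r, s) = mat2_one"
    using b(2,3) by (metis Abs_mat2_inverse UNIV_I a_def one_mat2.rep_eq times_mat2.rep_eq)+
  ultimately show ?thesis using T unfolding GL2T3_def by blast
qed

section \<open>Pairs of vectors modulo a subspace\<close>

lemma exists_det_nonzero_mapsto:
  fixes l1 l2 a c :: "'a::field"
  assumes "l1 \<noteq> 0 \<or> l2 \<noteq> 0" "a \<noteq> 0 \<or> c \<noteq> 0"
  shows "\<exists>m11 m12 m21 m22. m11 * m22 - m12 * m21 \<noteq> 0 \<and> m11 * l1 + m12 * l2 = a \<and> m21 * l1 + m22 * l2 = c"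
proof (cases "l1 = 0")
  case False
  show ?thesis
  proof (cases "a = 0")
    case True
    then show ?thesis using False assms(2)
      by (intro exI[of _ "- l2 / l1"] exI[of _ 1] exI[of _ "c / l1"] exI[of _ 0]) (simp add: field_simps)
  next
    case False
    then show ?thesis using \<open>l1 \<noteq> 0\<close>
      by (intro exI[of _ "a / l1"] exI[of _ 0] exI[of _ "(c - l2) / l1"] exI[of _ 1]) (simp add: field_simps)
  qed
next
  case True
  then have "l2 \<noteq> 0" using assms(1) by simp
  show ?thesis
  proof (cases "c = 0")
    case True
    then show ?thesis using \<open>l1 = 0\<close> \<open>l2 \<noteq> 0\<close> assms(2)
      by (intro exI[of _ 0] exI[of _ "a / l2"] exI[of _ 1] exI[of _ "c / l2"]) (simp add: field_simps)
  next
    case False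
    then show ?thesis using \<open>l1 = 0\<close> \<open>l2 \<noteq> 0\<close>
      by (intro exI[of _ 1] exI[of _ "a / l2"] exI[of _ 0] exI[of _ "c / l2"]) (simp add: field_simps)
  qed
qed

lemma subspace_lincomb2:
  fixes U :: "('a::field ^'n) set"
  assumes "vec.subspace U" "u \<in> U" "v \<in> U"
  shows "a *s u + b *s v \<in> U"
  using assms by (simp add: vec.subspace_add vec.subspace_scale)

lemma det_nonzero_if_independent_mod_subspace:
  fixes X Y W Z :: "'a::field ^'n"
  assumes U: "vec.subspace U"
    and indep: "\<And>c1 c2. c1 *s X + c2 *s Y \<in> U \<Longrightarrow> c1 = 0 \<and> c2 = 0"
    and W: "W - (\<alpha> *s X + \<beta> *s Y) \<in> U" and Z: "Z - (\<gamma> *s X + \<delta> *s Y) \<in> U"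
    and X: "X - (\<alpha>' *s W + \<beta>' *s Z) \<in> U" and Y: "Y - (\<gamma>' *s W + \<delta>' *s Z) \<in> U"
  shows "\<alpha> * \<delta> - \<beta> * \<gamma> \<noteq> 0"
proof -
  have "(1 - (\<alpha>' * \<alpha> + \<beta>' * \<gamma>)) *s X + (- (\<alpha>' * \<beta> + \<beta>' * \<delta>)) *s Y
      = (X - (\<alpha>' *s W + \<beta>' *s Z)) + (\<alpha>' *s (W - (\<alpha> *s X + \<beta> *s Y)) + \<beta>' *s (Z - (\<gamma> *s X + \<delta> *s Y)))"
    by (simp add: vec_eq_iff algebra_simps)
  also have "\<dots> \<in> U" by (rule vec.subspace_add[OF U X subspace_lincomb2[OF U W Z]])
  finally have "1 - (\<alpha>' * \<alpha> + \<beta>' * \<gamma>) = 0 \<and> - (\<alpha>' * \<beta> + \<beta>' * \<delta>) = 0" by (rule indep)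
  then have e1: "\<alpha>' * \<alpha> + \<beta>' * \<gamma> = 1" "\<alpha>' * \<beta> + \<beta>' * \<delta> = 0" by (simp_all add: add_eq_0_iff)
  have "(- (\<gamma>' * \<alpha> + \<delta>' * \<gamma>)) *s X + (1 - (\<gamma>' * \<beta> + \<delta>' * \<delta>)) *s Y
      = (Y - (\<gamma>' *s W + \<delta>' *s Z)) + (\<gamma>' *s (W - (\<alpha> *s X + \<beta> *s Y)) + \<delta>' *s (Z - (\<gamma> *s X + \<delta> *s Y)))"
    by (simp add: vec_eq_iff algebra_simps)
  also have "\<dots> \<in> U" by (rule vec.subspace_add[OF U Y subspace_lincomb2[OF U W Z]])
  finally have "- (\<gamma>' * \<alpha> + \<delta>' * \<gamma>) = 0 \<and> 1 - (\<gamma>' * \<beta> + \<delta>' * \<delta>) = 0" by (rule indep)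
  then have e2: "\<gamma>' * \<alpha> + \<delta>' * \<gamma> = 0" "\<gamma>' * \<beta> + \<delta>' * \<delta> = 1" by (simp_all add: add_eq_0_iff)
  \<comment> \<open>the two coefficient matrices are mutually inverse, so their determinants multiply to 1\<close>
  have "(\<alpha>' * \<delta>' - \<beta>' * \<gamma>') * (\<alpha> * \<delta> - \<beta> * \<gamma>)
      = (\<alpha>' * \<alpha> + \<beta>' * \<gamma>) * (\<gamma>' * \<beta> + \<delta>' * \<delta>) - (\<alpha>' * \<beta> + \<beta>' * \<delta>) * (\<gamma>' * \<alpha> + \<delta>' * \<gamma>)"
    by (simp add: algebra_simps)
  then show ?thesis using e1 e2 by auto
qed

lemma exists_det_nonzero_if_rank_one_mod_subspace:
  fixes X Y W Z G :: "'a::field ^'n"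
  assumes U: "vec.subspace U"
    and XG: "X - l1 *s G \<in> U" and YG: "Y - l2 *s G \<in> U" and XY: "X \<notin> U \<or> Y \<notin> U"
    and W: "W - (\<alpha> *s X + \<beta> *s Y) \<in> U" and Z: "Z - (\<gamma> *s X + \<delta> *s Y) \<in> U"
    and X: "X - (\<alpha>' *s W + \<beta>' *s Z) \<in> U" and Y: "Y - (\<gamma>' *s W + \<delta>' *s Z) \<in> U"
  shows "\<exists>a b c d. a * d - b * c \<noteq> 0 \<and> W - (a *s X + b *s Y) \<in> U \<and> Z - (c *s X + d *s Y) \<in> U"
proof -
  define a0 where "a0 = \<alpha> * l1 + \<beta> * l2"
  define c0 where "c0 = \<gamma> * l1 + \<delta> * l2"
  have "W - a0 *s G = (W - (\<alpha> *s X + \<beta> *s Y)) + (\<alpha> *s (X - l1 *s G) + \<beta> *s (Y - l2 *s G))"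
    by (simp add: a0_def vec_eq_iff algebra_simps)
  also have "\<dots> \<in> U" by (rule vec.subspace_add[OF U W subspace_lincomb2[OF U XG YG]])
  finally have WG: "W - a0 *s G \<in> U" .
  have "Z - c0 *s G = (Z - (\<gamma> *s X + \<delta> *s Y)) + (\<gamma> *s (X - l1 *s G) + \<delta> *s (Y - l2 *s G))"
    by (simp add: c0_def vec_eq_iff algebra_simps)
  also have "\<dots> \<in> U" by (rule vec.subspace_add[OF U Z subspace_lincomb2[OF U XG YG]])
  finally have ZG: "Z - c0 *s G \<in> U" .
  have l: "l1 \<noteq> 0 \<or> l2 \<noteq> 0"
  proof (rule ccontr)
    assume "\<not> (l1 \<noteq> 0 \<or> l2 \<noteq> 0)"
    then show False using XG YG XY by simp
  qed
  have ac: "a0 \<noteq> 0 \<or> c0 \<noteq> 0"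
  proof (rule ccontr)
    assume "\<not> (a0 \<noteq> 0 \<or> c0 \<noteq> 0)"
    then have "\<alpha>' *s W + \<beta>' *s Z \<in> U" "\<gamma>' *s W + \<delta>' *s Z \<in> U"
      using WG ZG by (simp_all add: subspace_lincomb2[OF U])
    then have "X \<in> U" "Y \<in> U"
      using vec.subspace_add[OF U X] vec.subspace_add[OF U Y] by (metis diff_add_cancel)+
    then show False using XY by blast
  qed
  obtain m11 m12 m21 m22 where
    m: "m11 * m22 - m12 * m21 \<noteq> 0" "m11 * l1 + m12 * l2 = a0" "m21 * l1 + m22 * l2 = c0"
    using exists_det_nonzero_mapsto[OF l ac] by blast
  have "W - (m11 *s X + m12 *s Y) = (W - a0 *s G) + ((- m11) *s (X - l1 *s G) + (- m12) *s (Y - l2 *s G))"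
    unfolding m(2)[symmetric] by (simp add: vec_eq_iff algebra_simps)
  also have "\<dots> \<in> U" by (rule vec.subspace_add[OF U WG subspace_lincomb2[OF U XG YG]])
  finally have WM: "W - (m11 *s X + m12 *s Y) \<in> U" .
  have "Z - (m21 *s X + m22 *s Y) = (Z - c0 *s G) + ((- m21) *s (X - l1 *s G) + (- m22) *s (Y - l2 *s G))"
    unfolding m(3)[symmetric] by (simp add: vec_eq_iff algebra_simps)
  also have "\<dots> \<in> U" by (rule vec.subspace_add[OF U ZG subspace_lincomb2[OF U XG YG]])
  finally show ?thesis using m(1) WM by blast
qed

lemma exists_det_nonzero_mod_subspace:
  fixes X Y W Z :: "'a::field ^'n"
  assumes U: "vec.subspace U"
    and W: "W - (\<alpha> *s X + \<beta> *s Y) \<in> U" and Z: "Z - (\<gamma> *s X + \<delta> *s Y) \<in> U"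
    and X: "X - (\<alpha>' *s W + \<beta>' *s Z) \<in> U" and Y: "Y - (\<gamma>' *s W + \<delta>' *s Z) \<in> U"
  shows "\<exists>a b c d. a * d - b * c \<noteq> 0 \<and> W - (a *s X + b *s Y) \<in> U \<and> Z - (c *s X + d *s Y) \<in> U"
proof (cases "\<forall>c1 c2. c1 *s X + c2 *s Y \<in> U \<longrightarrow> c1 = 0 \<and> c2 = 0")
  case True
  then show ?thesis using det_nonzero_if_independent_mod_subspace[OF U _ W Z X Y] W Z by blast
next
  case dependent: False
  show ?thesis
  proof (cases "X \<in> U \<and> Y \<in> U")
    case True
    then have "\<alpha> *s X + \<beta> *s Y \<in> U" "\<gamma> *s X + \<delta> *s Y \<in> U" by (simp_all add: subspace_lincomb2[OF U])
    then have "W \<in> U" "Z \<in> U"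
      using vec.subspace_add[OF U W] vec.subspace_add[OF U Z] by (metis diff_add_cancel)+
    then have "W - (1 *s X + 0 *s Y) \<in> U" "Z - (0 *s X + 1 *s Y) \<in> U"
      using True by (simp_all add: vec.subspace_diff[OF U])
    then show ?thesis by (intro exI[of _ 1] exI[of _ 0] exI[of _ 0] exI[of _ 1]) simp
  next
    case False
    obtain c1 c2 where c: "c1 *s X + c2 *s Y \<in> U" "c1 \<noteq> 0 \<or> c2 \<noteq> 0" using dependent by blast
    obtain G l1 l2 where "X - l1 *s G \<in> U" "Y - l2 *s G \<in> U"
    proof (cases "c2 = 0")
      case True
      have "(1 / c1) *s (c1 *s X + c2 *s Y) = X - 0 *s Y"
        using True c(2) by (simp add: vec_eq_iff)
      then have "X - 0 *s Y \<in> U" using vec.subspace_scale[OF U c(1), of "1 / c1"] by simp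
      moreover have "Y - 1 *s Y \<in> U" using vec.subspace_0[OF U] by simp
      ultimately show ?thesis by (rule that)
    next
      case False
      have "(1 / c2) *s (c1 *s X + c2 *s Y) = Y - (- c1 / c2) *s X"
        using False by (simp add: vec_eq_iff field_simps)
      then have "Y - (- c1 / c2) *s X \<in> U" using vec.subspace_scale[OF U c(1), of "1 / c2"] by metis
      moreover have "X - 1 *s X \<in> U" using vec.subspace_0[OF U] by simp
      ultimately show ?thesis using that by blast
    qed
    then show ?thesis using exists_det_nonzero_if_rank_one_mod_subspace[OF U _ _ _ W Z X Y] False by blast
  qed
qed

section \<open>Columns of the right ideal\<close>

lemma column_add: "column j (A + B) = column j A + column j B"
  by (simp add: column_def vec_eq_iff)

lemma column_matrix_mult: "column j (A ** B) = A *v column j B"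
  by (simp add: column_def matrix_matrix_mult_def matrix_vector_mult_def vec_eq_iff)

lemma matrix_vector_mult_axis: "(M::'a::comm_semiring_1^'n^'m) *v axis j c = c *s column j M"
  by (auto simp: matrix_vector_mult_def column_def axis_def vec_eq_iff if_distrib if_distribR
      sum.delta' mult.commute cong: if_cong)

lemma matrix_eq_iff_columns: "A = B \<longleftrightarrow> (\<forall>j. column j A = column j B)"
  by (auto simp: column_def vec_eq_iff)

lemma T3_mult_vector_vanishing:
  assumes "s \<in> T3" "\<forall>k\<le>j. v $ k = 0" "k \<le> j"
  shows "(s *v v) $ k = 0"
proof -
  have "s $ k $ l * v $ l = 0" for l
    using assms by (cases "l \<le> k") (auto simp: T3_def)
  then show ?thesis by (auto simp: matrix_vector_mult_def intro!: sum.neutral)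
qed

lemma right_ideal2_self: "x \<in> right_ideal2 x y" "y \<in> right_ideal2 x y"
  unfolding right_ideal2_def using T3_zero T3_one by force+

text \<open>For the right ideal of \<open>(x, y)\<close> this is the subspace U_j of the proof sketch, see
  \<open>tail_space_right_ideal2\<close>.\<close>

definition tail_space :: "('a::field^3^3) set \<Rightarrow> 3 \<Rightarrow> ('a^3) set" where
  "tail_space I j = {M *v v | M v. M \<in> I \<and> (\<forall>k\<le>j. v $ k = 0)}"

lemma tail_space_right_ideal2:
  "tail_space (right_ideal2 x y) j = {x *v a + y *v b | a b. (\<forall>k\<le>j. a $ k = 0) \<and> (\<forall>k\<le>j. b $ k = 0)}"
proof (intro equalityI subsetI)
  fix u assume "u \<in> tail_space (right_ideal2 x y) j"
  then obtain s t v where u: "u = (x ** s + y ** t) *v v" and st: "s \<in> T3" "t \<in> T3"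
    and v: "\<forall>k\<le>j. v $ k = 0"
    by (auto simp: tail_space_def right_ideal2_def)
  have "u = x *v (s *v v) + y *v (t *v v)"
    by (simp add: u matrix_vector_mul_assoc matrix_vector_mult_add_rdistrib)
  moreover have "\<forall>k\<le>j. (s *v v) $ k = 0" "\<forall>k\<le>j. (t *v v) $ k = 0"
    using T3_mult_vector_vanishing st v by blast+
  ultimately show "u \<in> {x *v a + y *v b | a b. (\<forall>k\<le>j. a $ k = 0) \<and> (\<forall>k\<le>j. b $ k = 0)}" by blast
next
  fix u assume "u \<in> {x *v a + y *v b | a b. (\<forall>k\<le>j. a $ k = 0) \<and> (\<forall>k\<le>j. b $ k = 0)}"
  then obtain a b where u: "u = x *v a + y *v b" and ab: "\<forall>k\<le>j. a $ k = 0" "\<forall>k\<le>j. b $ k = 0" by blast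
  define v :: "'a^3" where "v = (\<chi> k. if k \<le> j then 0 else 1)"
  \<comment> \<open>the diagonal matrix with entries \<open>a\<close> maps \<open>v\<close> to \<open>a\<close> because \<open>a\<close> vanishes where \<open>v\<close> does\<close>
  have "diag_mat (($) a) *v v = a" "diag_mat (($) b) *v v = b"
    using ab by (auto simp: diag_mat_mult_vector v_def vec_eq_iff)
  then have "u = (x ** diag_mat (($) a) + y ** diag_mat (($) b)) *v v"
    by (simp add: u matrix_vector_mul_assoc[symmetric] matrix_vector_mult_add_rdistrib)
  moreover have "x ** diag_mat (($) a) + y ** diag_mat (($) b) \<in> right_ideal2 x y"
    unfolding right_ideal2_def using diag_mat_T3 by blast
  moreover have "\<forall>k\<le>j. v $ k = 0" by (simp add: v_def)
  ultimately show "u \<in> tail_space (right_ideal2 x y) j" unfolding tail_space_def by blast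
qed

lemma subspace_tail_space: "vec.subspace (tail_space (right_ideal2 x y) j)"
  unfolding tail_space_right_ideal2 vec.subspace_def
proof (intro conjI allI impI ballI)
  show "0 \<in> {x *v a + y *v b | a b. (\<forall>k\<le>j. a $ k = 0) \<and> (\<forall>k\<le>j. b $ k = 0)}"
    by (rule CollectI, rule exI[of _ 0], rule exI[of _ 0]) simp
next
  fix c u assume "u \<in> {x *v a + y *v b | a b. (\<forall>k\<le>j. a $ k = 0) \<and> (\<forall>k\<le>j. b $ k = 0)}"
  then obtain a b where "u = x *v a + y *v b" "\<forall>k\<le>j. a $ k = 0" "\<forall>k\<le>j. b $ k = 0" by blast
  then show "c *s u \<in> {x *v a + y *v b | a b. (\<forall>k\<le>j. a $ k = 0) \<and> (\<forall>k\<le>j. b $ k = 0)}"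
    by (intro CollectI exI[of _ "c *s a"] exI[of _ "c *s b"])
      (simp add: vector_scalar_commute vector_add_ldistrib)
next
  fix u u' assume "u \<in> {x *v a + y *v b | a b. (\<forall>k\<le>j. a $ k = 0) \<and> (\<forall>k\<le>j. b $ k = 0)}"
    "u' \<in> {x *v a + y *v b | a b. (\<forall>k\<le>j. a $ k = 0) \<and> (\<forall>k\<le>j. b $ k = 0)}"
  then obtain a b a' b' where "u = x *v a + y *v b" "\<forall>k\<le>j. a $ k = 0" "\<forall>k\<le>j. b $ k = 0"
    "u' = x *v a' + y *v b'" "\<forall>k\<le>j. a' $ k = 0" "\<forall>k\<le>j. b' $ k = 0" by blast
  then show "u + u' \<in> {x *v a + y *v b | a b. (\<forall>k\<le>j. a $ k = 0) \<and> (\<forall>k\<le>j. b $ k = 0)}"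
    by (intro CollectI exI[of _ "a + a'"] exI[of _ "b + b'"]) (simp add: algebra_simps)
qed

lemma column_mod_tail_space:
  assumes "M \<in> right_ideal2 x y"
  shows "\<exists>\<alpha> \<beta>. column j M - (\<alpha> *s column j x + \<beta> *s column j y) \<in> tail_space (right_ideal2 x y) j"
proof -
  obtain s t where M: "M = x ** s + y ** t" and st: "s \<in> T3" "t \<in> T3"
    using assms unfolding right_ideal2_def by blast
  define a where "a = column j s - axis j (s $ j $ j)"
  define b where "b = column j t - axis j (t $ j $ j)"
  have "column j M - ((s $ j $ j) *s column j x + (t $ j $ j) *s column j y) = x *v a + y *v b"
    by (simp add: M a_def b_def column_add column_matrix_mult matrix_vector_mult_diff_distrib
        matrix_vector_mult_axis)
  moreover have "\<forall>k\<le>j. a $ k = 0" "\<forall>k\<le>j. b $ k = 0"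
    using st by (auto simp: a_def b_def column_def axis_def T3_def)
  ultimately show ?thesis unfolding tail_space_right_ideal2 by blast
qed

lemma column_lift_mod_tail_space:
  assumes "u - (\<alpha> *s column j x + \<beta> *s column j y) \<in> tail_space (right_ideal2 x y) j"
  obtains P R where "\<forall>k<j. P $ k = 0 \<and> R $ k = 0" "P $ j = \<alpha>" "R $ j = \<beta>" "u = x *v P + y *v R"
proof -
  obtain a b where ab: "u - (\<alpha> *s column j x + \<beta> *s column j y) = x *v a + y *v b"
    "\<forall>k\<le>j. a $ k = 0" "\<forall>k\<le>j. b $ k = 0"
    using assms unfolding tail_space_right_ideal2 by blast
  have "u = x *v (a + axis j \<alpha>) + y *v (b + axis j \<beta>)"
    using ab(1) by (simp add: matrix_vector_right_distrib matrix_vector_mult_axis algebra_simps)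
  moreover have "\<forall>k<j. (a + axis j \<alpha>) $ k = 0 \<and> (b + axis j \<beta>) $ k = 0"
    using ab(2,3) by (auto simp: axis_def)
  moreover have "(a + axis j \<alpha>) $ j = \<alpha>" "(b + axis j \<beta>) $ j = \<beta>"
    using ab(2,3) by simp_all
  ultimately show ?thesis using that by blast
qed

lemma right_ideal2_eq_column_relation:
  assumes eq: "right_ideal2 x y = right_ideal2 w z"
  obtains P Q R S where "\<forall>k<j. P $ k = 0 \<and> Q $ k = 0 \<and> R $ k = 0 \<and> S $ k = 0"
    "column j w = x *v P + y *v R" "column j z = x *v Q + y *v S" "P $ j * S $ j - Q $ j * R $ j \<noteq> 0"
proof -
  let ?U = "tail_space (right_ideal2 x y) j"
  obtain \<alpha> \<beta> \<gamma> \<delta> where "column j w - (\<alpha> *s column j x + \<beta> *s column j y) \<in> ?U"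
    "column j z - (\<gamma> *s column j x + \<delta> *s column j y) \<in> ?U"
    using column_mod_tail_space right_ideal2_self eq by metis
  moreover obtain \<alpha>' \<beta>' \<gamma>' \<delta>' where "column j x - (\<alpha>' *s column j w + \<beta>' *s column j z) \<in> ?U"
    "column j y - (\<gamma>' *s column j w + \<delta>' *s column j z) \<in> ?U"
    using column_mod_tail_space right_ideal2_self eq by metis
  ultimately obtain a b c d where det: "a * d - b * c \<noteq> 0"
    and w: "column j w - (a *s column j x + b *s column j y) \<in> ?U"
    and z: "column j z - (c *s column j x + d *s column j y) \<in> ?U"
    using exists_det_nonzero_mod_subspace[OF subspace_tail_space] by metis
  obtain P R where PR: "\<forall>k<j. P $ k = 0 \<and> R $ k = 0" "P $ j = a" "R $ j = b" "column j w = x *v P + y *v R"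
    using column_lift_mod_tail_space[OF w] by blast
  obtain Q S where QS: "\<forall>k<j. Q $ k = 0 \<and> S $ k = 0" "Q $ j = c" "S $ j = d" "column j z = x *v Q + y *v S"
    using column_lift_mod_tail_space[OF z] by blast
  show ?thesis
    by (rule that[of P Q R S]) (use PR QS det in \<open>simp_all add: mult.commute\<close>)
qed

lemma GL2T3_orbit_if_right_ideal2_eq:
  assumes eq: "right_ideal2 x y = right_ideal2 w z"
  shows "\<exists>A\<in>GL2T3. act (x, y) A = (w, z)"
proof -
  define rel where "rel j P Q R S \<longleftrightarrow> (\<forall>k<j. P $ k = 0 \<and> Q $ k = 0 \<and> R $ k = 0 \<and> S $ k = 0) \<and>
      column j w = x *v P + y *v R \<and> column j z = x *v Q + y *v S \<and> P $ j * S $ j - Q $ j * R $ j \<noteq> 0"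
    for j P Q R S
  have "\<exists>P Q R S. rel j P Q R S" for j
    using right_ideal2_eq_column_relation[OF eq, of j] unfolding rel_def by metis
  then have "\<forall>j. \<exists>P Q R S. rel j P Q R S" by blast
  from choice[OF this] obtain P where "\<forall>j. \<exists>Q R S. rel j (P j) Q R S" ..
  from choice[OF this] obtain Q where "\<forall>j. \<exists>R S. rel j (P j) (Q j) R S" ..
  from choice[OF this] obtain R where "\<forall>j. \<exists>S. rel j (P j) (Q j) (R j) S" ..
  from choice[OF this] obtain S where PQRS: "\<forall>j. rel j (P j) (Q j) (R j) (S j)" ..
  define p q r s where "p = transpose (\<chi> l. P l)" "q = transpose (\<chi> l. Q l)"
    "r = transpose (\<chi> l. R l)" "s = transpose (\<chi> l. S l)"
  have T: "in_T3_mat2 (p, q, r, s)"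
    using PQRS by (simp add: rel_def T3_def p_q_r_s_def transpose_def)
  have det: "\<And>i. p $ i $ i * s $ i $ i - q $ i $ i * r $ i $ i \<noteq> 0"
    using PQRS by (simp add: rel_def p_q_r_s_def transpose_def)
  have "act (x, y) (p, q, r, s) = (w, z)"
    using PQRS by (simp add: rel_def matrix_eq_iff_columns column_add column_matrix_mult
        row_def p_q_r_s_def)
  then show ?thesis using GL2T3_if_diagonal_dets_nonzero[OF T det] by blast
qed

theorem mainTheorem9:
  fixes x y w z :: "'a::field ^3^3"
  assumes "x \<in> T3" "y \<in> T3" "w \<in> T3" "z \<in> T3"
    and "free_pair x y" and "free_pair w z"
  shows "(\<exists>A\<in>GL2T3. act (x, y) A = (w, z)) \<longleftrightarrow> right_ideal2 x y = right_ideal2 w z"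
  using right_ideal2_eq_if_GL2T3 GL2T3_orbit_if_right_ideal2_eq by blast

end
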